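(* For every $k\ge2$ and every $n\ge1$, the families $\mathrm{SLT}_k$ and $\mathrm{RL}_n^V$ are incomparable (neither is contained in the other); likewise, for every $n\ge1$, $\mathrm{SLT}$ and $\mathrm{RL}_n^V$ are incomparable.
   Context: Strictly locally testable languages: let $V$ be an alphabet and $k\ge1$. For $B,I,E\subseteq V^k$ and $F\subseteq V^{\le k-1}$, $\mathrm{slt}(B,I,E,F)$ is the language over $V$ consisting of all words in $F$ together with all words $a_1\cdots a_n$ ($a_i\in V$, $n\ge k$) with $a_1\cdots a_k\in B$, $a_{j+1}\cdots a_{j+k}\in I$ for all $1\le j\le n-k-1$, and $a_{n-k+1}\cdots a_n\in E$. $\mathrm{SLT}_k$ is the family of languages of this form and $\mathrm{SLT}=\bigcup_{k\ge1}\mathrm{SLT}_k$. A right-linear grammar is $G=(N,T,P,S)$ with rules $A\to wB$ or $A\to w$ ($A,B\in N$, $w\in T^*$). For a regular language $L$, $\mathrm{Var}_{RL}(L)$ is the minimum of $|N|$ over all right-linear grammars generating $L$; $\mathrm{RL}_n^V=\{L\text{ regular}:\mathrm{Var}_{RL}(L)\le n\}$. *)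

theory Defs
  imports Main
begin

text \<open>Letters are natural numbers (any finite alphabet embeds into nat);
  an alphabet is a finite set V of letters, words are lists.\<close>

type_synonym word = "nat list"
type_synonym language = "word set"

definition slt :: "nat set \<Rightarrow> nat \<Rightarrow> word set \<Rightarrow> word set \<Rightarrow> word set \<Rightarrow> word set \<Rightarrow> language" where
  "slt V k B I E F = F \<union>
     {w. w \<in> lists V \<and> length w \<ge> k \<and> take k w \<in> B
         \<and> (\<forall>j. 1 \<le> j \<and> j \<le> length w - k - 1 \<longrightarrow> take k (drop j w) \<in> I)
         \<and> drop (length w - k) w \<in> E}"

definition SLT_k :: "nat \<Rightarrow> language set" where
  "SLT_k k = {slt V k B I E F | V B I E F.
      finite V
      \<and> B \<subseteq> {w \<in> lists V. length w = k}
      \<and> I \<subseteq> {w \<in> lists V. length w = k}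
      \<and> E \<subseteq> {w \<in> lists V. length w = k}
      \<and> F \<subseteq> {w \<in> lists V. length w \<le> k - 1}}"

definition SLT :: "language set" where
  "SLT = (\<Union>k\<in>{k. k \<ge> 1}. SLT_k k)"

text \<open>Right-linear grammars: nonterminals are naturals. A rule (A, w, Some B) is
  A \<rightarrow> w B, a rule (A, w, None) is A \<rightarrow> w.\<close>

record rlgrammar =
  nonterms :: "nat set"
  terms :: "nat set"
  rules :: "(nat \<times> word \<times> nat option) set"
  start :: nat

definition rl_grammar :: "rlgrammar \<Rightarrow> bool" where
  "rl_grammar G \<longleftrightarrow> finite (nonterms G) \<and> finite (terms G) \<and> finite (rules G)
     \<and> start G \<in> nonterms G
     \<and> (\<forall>(A, w, X) \<in> rules G. A \<in> nonterms G \<and> w \<in> lists (terms G)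
            \<and> (\<forall>B. X = Some B \<longrightarrow> B \<in> nonterms G))"

inductive derives :: "rlgrammar \<Rightarrow> nat \<Rightarrow> word \<Rightarrow> bool" for G where
  term_rule: "(A, w, None) \<in> rules G \<Longrightarrow> derives G A w"
| cont_rule: "(A, w, Some B) \<in> rules G \<Longrightarrow> derives G B v \<Longrightarrow> derives G A (w @ v)"

definition lang :: "rlgrammar \<Rightarrow> language" where
  "lang G = {w. derives G (start G) w}"

definition regular :: "language \<Rightarrow> bool" where
  "regular L \<longleftrightarrow> (\<exists>G. rl_grammar G \<and> lang G = L)"

definition Var_RL :: "language \<Rightarrow> nat" where
  "Var_RL L = (LEAST m. \<exists>G. rl_grammar G \<and> lang G = L \<and> card (nonterms G) = m)"

definition RL_n :: "nat \<Rightarrow> language set" where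
  "RL_n n = {L. regular L \<and> Var_RL L \<le> n}"

end

theory Submission
  imports Defs
begin

text \<open>The language of unary blocks
  \<open>{a\<^sup>m | a \<le> n, m \<ge> 1}\<close> is strictly locally testable for every \<open>k \<ge> 2\<close>, since a word all of
  whose \<open>k\<close>-windows are constant is itself constant; but a right-linear grammar for it
  needs \<open>n + 1\<close> nonterminals, because a long block \<open>a\<^sup>m\<close> must pass through a nonterminal
  after a nonempty prefix, and two different letters cannot share that nonterminal
  without generating a mixed word. Conversely, the words of even length over one
  letter need a single nonterminal, but no \<open>SLT\<^sub>k\<close> language contains \<open>0\<^sup>2\<^sup>k\<^sup>+\<^sup>2\<close> without
  also containing \<open>0\<^sup>2\<^sup>k\<^sup>+\<^sup>1\<close>, as both have only the window \<open>0\<^sup>k\<close>.\<close>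

section \<open>Right-linear grammars\<close>

inductive reaches :: "rlgrammar \<Rightarrow> nat \<Rightarrow> word \<Rightarrow> nat \<Rightarrow> bool" for G where
  reaches_refl: "reaches G A [] A"
| reaches_step: "(A, w, Some C) \<in> rules G \<Longrightarrow> reaches G C v B \<Longrightarrow> reaches G A (w @ v) B"

lemma reaches_derives: "reaches G A x C \<Longrightarrow> derives G C y \<Longrightarrow> derives G A (x @ y)"
  by (induction rule: reaches.induct) (auto intro: derives.cont_rule)

lemma rule_length_bounded:
  assumes "rl_grammar G"
  obtains M where "\<forall>(A, u, X) \<in> rules G. length u \<le> M"
proof -
  have "finite ((\<lambda>(A, u, X). length u) ` rules G)"
    using assms by (simp add: rl_grammar_def)
  then obtain M where "\<forall>l \<in> (\<lambda>(A, u, X). length u) ` rules G. l \<le> M"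
    using finite_nat_set_iff_bounded_le by blast
  then show thesis using that by fastforce
qed

lemma derives_split_long_word:
  assumes "derives G A w" and "rl_grammar G"
    and "\<forall>(A', u, X) \<in> rules G. length u \<le> M" and "M < length w"
  shows "\<exists>C x y. C \<in> nonterms G \<and> reaches G A x C \<and> derives G C y \<and> w = x @ y
           \<and> x \<noteq> [] \<and> y \<noteq> []"
  using assms
proof (induction rule: derives.induct)
  case (term_rule A w)
  then show ?case by fastforce
next
  case (cont_rule A w B v)
  have B: "B \<in> nonterms G"
    using cont_rule.hyps(1) cont_rule.prems(1) by (fastforce simp: rl_grammar_def)
  consider "w = []" | "w \<noteq> []" "v = []" | "w \<noteq> []" "v \<noteq> []" by blast
  then show ?case
  proof cases
    case 1
    then obtain C x y where "C \<in> nonterms G" "reaches G B x C" "derives G C y"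
        "v = x @ y" "x \<noteq> []" "y \<noteq> []"
      using cont_rule by auto
    moreover have "reaches G A x C"
      using reaches_step[OF cont_rule.hyps(1) \<open>reaches G B x C\<close>] 1 by simp
    ultimately show ?thesis using 1 by auto
  next
    case 2
    then show ?thesis using cont_rule by fastforce
  next
    case 3
    have "reaches G A w B" using reaches_step[OF cont_rule.hyps(1) reaches_refl] by simp
    then show ?thesis using 3 B cont_rule.hyps(2) by blast
  qed
qed

lemma Var_RL_le_card:
  "rl_grammar G \<Longrightarrow> lang G = L \<Longrightarrow> Var_RL L \<le> card (nonterms G)"
  unfolding Var_RL_def by (rule Least_le) blast

lemma RL_n_grammar:
  assumes "L \<in> RL_n n"
  obtains G where "rl_grammar G" "lang G = L" "card (nonterms G) \<le> n"
proof -
  from assms obtain G where G: "rl_grammar G" "lang G = L"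
    unfolding RL_n_def regular_def by blast
  have "\<exists>G. rl_grammar G \<and> lang G = L \<and> card (nonterms G) = Var_RL L"
    unfolding Var_RL_def by (rule LeastI_ex) (use G in blast)
  moreover have "Var_RL L \<le> n" using assms unfolding RL_n_def by blast
  ultimately show thesis using that by force
qed

section \<open>Strictly locally testable languages\<close>

lemma slt_window:
  assumes "w \<in> slt V k B I E F" "w \<notin> F" "j \<le> length w - k"
  shows "take k (drop j w) \<in> B \<union> I \<union> E"
proof -
  have w: "length w \<ge> k" "take k w \<in> B" "drop (length w - k) w \<in> E"
    "\<forall>j. 1 \<le> j \<and> j \<le> length w - k - 1 \<longrightarrow> take k (drop j w) \<in> I"
    using assms(1,2) unfolding slt_def by auto
  consider "j = 0" | "1 \<le> j \<and> j \<le> length w - k - 1" | "j = length w - k"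
    using assms(3) by linarith
  then show ?thesis
  proof cases
    case 1
    then show ?thesis using w(2) by simp
  next
    case 2
    then show ?thesis using w(4) by blast
  next
    case 3
    then have "take k (drop j w) = drop (length w - k) w" using w(1) by simp
    then show ?thesis using w(3) by simp
  qed
qed

lemma replicate_in_slt:
  assumes "a \<in> V" "k \<le> m" "replicate k a \<in> B" "replicate k a \<in> I" "replicate k a \<in> E"
  shows "replicate m a \<in> slt V k B I E F"
proof -
  have "min k (m - j) = k" if "j \<le> m - k" for j
    using that assms(2) by simp
  then show ?thesis using assms unfolding slt_def by (auto simp: in_lists_conv_set)
qed

lemma replicate_in_SLT_k:
  assumes "L \<in> SLT_k k" "1 \<le> k" "replicate m a \<in> L" "k + 2 \<le> m" "k \<le> m'"
  shows "replicate m' a \<in> L"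
proof -
  obtain V B I E F where L: "L = slt V k B I E F"
    and F: "F \<subseteq> {w \<in> lists V. length w \<le> k - 1}"
    using assms(1) unfolding SLT_k_def by blast
  let ?w = "replicate m a"
  have "?w \<notin> F" using F assms(2,4) by auto
  \<comment> \<open>\<open>k + 2 \<le> m\<close> guarantees an inner window, so \<open>a\<^sup>k \<in> I\<close>\<close>
  then have "?w \<in> lists V" "take k ?w \<in> B" "take k (drop 1 ?w) \<in> I"
      "drop (length ?w - k) ?w \<in> E"
    using assms(3,4) unfolding L slt_def by auto
  moreover have "take k ?w = replicate k a" "take k (drop 1 ?w) = replicate k a"
      "drop (length ?w - k) ?w = replicate k a"
    using assms(4) by simp_all
  ultimately have "a \<in> V" "replicate k a \<in> B" "replicate k a \<in> I" "replicate k a \<in> E"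
    using assms(2,4) by auto
  then show ?thesis unfolding L using replicate_in_slt assms(5) by blast
qed

lemma replicate_if_adjacent_eq:
  assumes "\<And>p. Suc p < length w \<Longrightarrow> w ! p = w ! Suc p"
  shows "w = replicate (length w) (hd w)"
proof -
  have const: "w ! p = w ! 0" if "p < length w" for p
    using that by (induction p) (simp_all add: assms[symmetric])
  show ?thesis
  proof (rule nth_equalityI)
    fix p assume "p < length w"
    then have "w \<noteq> []" "replicate (length w) (hd w) ! p = hd w" by auto
    then show "w ! p = replicate (length w) (hd w) ! p"
      using const[OF \<open>p < length w\<close>] by (simp add: hd_conv_nth)
  qed simp
qed

lemma replicate_if_windows_constant:
  assumes "2 \<le> k" "k \<le> length w"
    and windows: "\<And>j. j \<le> length w - k \<Longrightarrow> \<exists>c. take k (drop j w) = replicate k c"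
  shows "w = replicate (length w) (hd w)"
proof (rule replicate_if_adjacent_eq)
  fix p assume p: "Suc p < length w"
  define j where "j = min p (length w - k)"
  \<comment> \<open>the window at \<open>j\<close> covers both positions \<open>p\<close> and \<open>p + 1\<close>\<close>
  have j: "j \<le> p" "Suc p - j < k" "j \<le> length w - k"
    using assms(1,2) p unfolding j_def by auto
  obtain c where c: "take k (drop j w) = replicate k c" using windows j(3) by blast
  have "w ! (j + i) = c" if "i < k" for i
    using arg_cong[OF c, of "\<lambda>u. u ! i"] that assms(2) j(3) by simp
  from this[of "p - j"] this[of "Suc p - j"] j show "w ! p = w ! Suc p" by simp
qed

section \<open>The witness languages\<close>

definition unary_blocks :: "nat \<Rightarrow> language" where
  "unary_blocks n = {replicate m a | a m. a \<le> n \<and> 1 \<le> m}"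

definition even_zeros :: language where
  "even_zeros = {replicate (2 * m) 0 | m. True}"

lemma unary_blocks_in_SLT_k:
  assumes k: "2 \<le> k"
  shows "unary_blocks n \<in> SLT_k k"
proof -
  define V where "V = {0..n}"
  define W where "W = {replicate k a | a. a \<le> n}"
  define F where "F = {replicate m a | a m. a \<le> n \<and> 1 \<le> m \<and> m \<le> k - 1}"
  have "unary_blocks n = slt V k W W W F"
  proof (intro equalityI subsetI)
    fix w assume "w \<in> unary_blocks n"
    then obtain a m where w: "w = replicate m a" "a \<le> n" "1 \<le> m"
      unfolding unary_blocks_def by blast
    show "w \<in> slt V k W W W F"
    proof (cases "m < k")
      case True
      then have "w \<in> F" using w unfolding F_def by force
      then show ?thesis unfolding slt_def by blast
    next
      case False
      have "a \<in> V" "replicate k a \<in> W" using w unfolding V_def W_def by auto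
      then show ?thesis using replicate_in_slt False w(1) by simp
    qed
  next
    fix w assume w: "w \<in> slt V k W W W F"
    show "w \<in> unary_blocks n"
    proof (cases "w \<in> F")
      case True
      then show ?thesis unfolding F_def unary_blocks_def by blast
    next
      case False
      then have len: "k \<le> length w" and "w \<in> lists V" using w unfolding slt_def by auto
      have "\<exists>c. take k (drop j w) = replicate k c" if "j \<le> length w - k" for j
        using slt_window[OF w False that] unfolding W_def by blast
      then have "w = replicate (length w) (hd w)"
        using replicate_if_windows_constant[OF k len] by blast
      moreover have "hd w \<in> V" using \<open>w \<in> lists V\<close> len k by (cases w) auto
      ultimately show ?thesis using len k unfolding unary_blocks_def V_def
        by (intro CollectI exI[of _ "hd w"] exI[of _ "length w"]) auto
    qed
  qed
  moreover have "W \<subseteq> {w \<in> lists V. length w = k}" "F \<subseteq> {w \<in> lists V. length w \<le> k - 1}"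
    unfolding W_def F_def V_def by (auto simp: in_lists_conv_set)
  ultimately show ?thesis unfolding SLT_k_def V_def by blast
qed

lemma unary_blocks_card_nonterms:
  assumes G: "rl_grammar G" and L: "lang G = unary_blocks n"
  shows "n < card (nonterms G)"
proof -
  obtain M where M: "\<forall>(A, u, X) \<in> rules G. length u \<le> M"
    using rule_length_bounded[OF G] .
  have "\<exists>C. C \<in> nonterms G \<and> (\<exists>x y. reaches G (start G) x C \<and> derives G C y
      \<and> hd x = a \<and> last y = a \<and> x \<noteq> [] \<and> y \<noteq> [])" if "a \<in> {0..n}" for a
  proof -
    have "replicate (Suc M) a \<in> unary_blocks n"
      using that unfolding unary_blocks_def by force
    then have "derives G (start G) (replicate (Suc M) a)"
      using L unfolding lang_def by blast
    from derives_split_long_word[OF this G M] obtain C x y where C: "C \<in> nonterms G"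
        "reaches G (start G) x C" "derives G C y" "replicate (Suc M) a = x @ y" "x \<noteq> []" "y \<noteq> []"
      by auto
    have "hd (x @ y) = a" "last (x @ y) = a" unfolding C(4)[symmetric] by simp_all
    then have "hd x = a" "last y = a" using C(5,6) by simp_all
    then show ?thesis using C by blast
  qed
  then obtain f where f: "\<And>a. a \<in> {0..n} \<Longrightarrow> f a \<in> nonterms G \<and> (\<exists>x y.
      reaches G (start G) x (f a) \<and> derives G (f a) y \<and> hd x = a \<and> last y = a \<and> x \<noteq> [] \<and> y \<noteq> [])"
    by metis
  \<comment> \<open>sharing a nonterminal would let \<open>G\<close> derive a word starting with \<open>a\<close> and ending with \<open>b\<close>\<close>
  have "inj_on f {0..n}"
  proof (rule inj_onI)
    fix a b assume a: "a \<in> {0..n}" and b: "b \<in> {0..n}" and eq: "f a = f b"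
    obtain x where x: "reaches G (start G) x (f a)" "hd x = a" "x \<noteq> []" using f[OF a] by blast
    obtain y where y: "derives G (f b) y" "last y = b" "y \<noteq> []" using f[OF b] by blast
    have "derives G (start G) (x @ y)" using reaches_derives[OF x(1)] y(1) eq by simp
    then have "x @ y \<in> unary_blocks n" using L unfolding lang_def by blast
    then obtain c m where "x @ y = replicate m c" "1 \<le> m" unfolding unary_blocks_def by blast
    then have "hd (x @ y) = c" "last (x @ y) = c" by auto
    then show "a = b" using x y by simp
  qed
  moreover have "f ` {0..n} \<subseteq> nonterms G" using f by blast
  moreover have "finite (nonterms G)" using G by (simp add: rl_grammar_def)
  ultimately have "card {0..n} \<le> card (nonterms G)" by (meson card_inj_on_le)
  then show ?thesis by simp
qed

lemma unary_blocks_not_in_RL_n: "unary_blocks n \<notin> RL_n n"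
  using unary_blocks_card_nonterms by (fastforce elim: RL_n_grammar)

definition even_zeros_grammar :: rlgrammar where
  "even_zeros_grammar =
     \<lparr>nonterms = {0}, terms = {0}, rules = {(0, [0, 0], Some 0), (0, [], None)}, start = 0\<rparr>"

lemma lang_even_zeros_grammar: "lang even_zeros_grammar = even_zeros"
proof (intro equalityI subsetI)
  have "\<exists>m. w = replicate (2 * m) 0" if "derives even_zeros_grammar A w" for A w
    using that
  proof (induction rule: derives.induct)
    case (term_rule A w)
    then show ?case unfolding even_zeros_grammar_def by (auto intro: exI[of _ 0])
  next
    case (cont_rule A w B v)
    then obtain m where "w @ v = replicate (2 * Suc m) 0"
      unfolding even_zeros_grammar_def by auto
    then show ?case by blast
  qed
  then show "w \<in> even_zeros" if "w \<in> lang even_zeros_grammar" for w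
    using that unfolding lang_def even_zeros_def by blast
next
  have "derives even_zeros_grammar 0 (replicate (2 * m) 0)" for m
  proof (induction m)
    case 0
    show ?case by (rule derives.term_rule) (simp add: even_zeros_grammar_def)
  next
    case (Suc m)
    have "(0, [0, 0], Some 0) \<in> rules even_zeros_grammar" by (simp add: even_zeros_grammar_def)
    from derives.cont_rule[OF this Suc.IH] show ?case by simp
  qed
  then show "w \<in> lang even_zeros_grammar" if "w \<in> even_zeros" for w
    using that unfolding lang_def even_zeros_def even_zeros_grammar_def by auto
qed

lemma even_zeros_in_RL_n:
  assumes "1 \<le> n"
  shows "even_zeros \<in> RL_n n"
proof -
  have G: "rl_grammar even_zeros_grammar" unfolding rl_grammar_def even_zeros_grammar_def by auto
  have "Var_RL even_zeros \<le> card (nonterms even_zeros_grammar)"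
    using Var_RL_le_card[OF G lang_even_zeros_grammar] .
  also have "\<dots> = 1" by (simp add: even_zeros_grammar_def)
  finally have "Var_RL even_zeros \<le> n" using assms by simp
  moreover have "regular even_zeros"
    using G lang_even_zeros_grammar unfolding regular_def by blast
  ultimately show ?thesis unfolding RL_n_def by blast
qed

lemma even_zeros_not_in_SLT_k:
  assumes "1 \<le> k"
  shows "even_zeros \<notin> SLT_k k"
proof
  assume SLT: "even_zeros \<in> SLT_k k"
  have "replicate (2 * (k + 1)) 0 \<in> even_zeros" unfolding even_zeros_def by blast
  then have "replicate (2 * k + 1) 0 \<in> even_zeros"
    by (rule replicate_in_SLT_k[OF SLT assms]) simp_all
  then obtain m where "replicate (2 * k + 1) 0 = replicate (2 * m) (0::nat)"
    unfolding even_zeros_def by blast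
  then have "2 * k + 1 = 2 * m" by (metis length_replicate)
  then show False by presburger
qed

theorem mainTheorem13:
  shows "(\<forall>k n. k \<ge> 2 \<and> n \<ge> 1 \<longrightarrow>
            \<not> SLT_k k \<subseteq> RL_n n \<and> \<not> RL_n n \<subseteq> SLT_k k)
       \<and> (\<forall>n. n \<ge> 1 \<longrightarrow> \<not> SLT \<subseteq> RL_n n \<and> \<not> RL_n n \<subseteq> SLT)"
proof (intro conjI allI impI)
  fix k n :: nat assume "k \<ge> 2 \<and> n \<ge> 1"
  then have k: "2 \<le> k" "1 \<le> k" and n: "1 \<le> n" by simp_all
  show "\<not> SLT_k k \<subseteq> RL_n n"
    using unary_blocks_in_SLT_k[OF k(1)] unary_blocks_not_in_RL_n by blast
  show "\<not> RL_n n \<subseteq> SLT_k k"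
    using even_zeros_in_RL_n[OF n] even_zeros_not_in_SLT_k[OF k(2)] by blast
next
  fix n :: nat assume n: "n \<ge> 1"
  have "unary_blocks n \<in> SLT"
    unfolding SLT_def by (rule UN_I[of 2]) (simp_all add: unary_blocks_in_SLT_k)
  then show "\<not> SLT \<subseteq> RL_n n" using unary_blocks_not_in_RL_n by blast
  have "even_zeros \<notin> SLT"
    unfolding SLT_def by (simp add: even_zeros_not_in_SLT_k)
  then show "\<not> RL_n n \<subseteq> SLT" using even_zeros_in_RL_n[OF n] by blast
qed

end
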